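(* Consider the disturbance-free discrete-time system $$x(t+1)=A\,Z(x(t))+B\,u(t),\qquad Z(x)=\begin{bmatrix}x\\ S(x)\end{bmatrix}\in\mathbb{R}^{n+N},$$ with unknown $A=[A_1\ \ A_2]$ ($A_1\in\mathbb{R}^{n\times n}$, $A_2\in\mathbb{R}^{n\times N}$), unknown $B\in\mathbb{R}^{n\times m}$, and known $S:\mathbb{R}^n\to\mathbb{R}^N$ differentiable with $S(0)=0$. Let $A_s=\frac{\partial S}{\partial x}(0)$, $Q(x)=S(x)-A_sx$, $\bar A_1=A_1+A_2A_s$, and assume $(\bar A_1,B)$ is stabilizable and $Q$ is Lipschitz on the safe set $\mathcal{S}(F,g)=\{x\in\mathbb{R}^n: Fx\le g\}$, where $F\in\mathbb{R}^{s\times n}$, $g\in\mathbb{R}^s$ and $\mathcal{S}(F,g)$ is a polyhedral C-set. Let data $U_0,X_0,X_1,V_0$ be collected from this system (with no disturbance), with $V_0$ of full row rank and $T\ge n+N+1$. Let $\lambda\in(0,1]$. Suppose there exist $G_K=[G_{K,1}\ \ G_{K,2}]\in\mathbb{R}^{T\times(n+N)}$ and $P_s\in\mathbb{R}^{s\times s}$ such that $$P_sg\le\lambda g-l^d,\qquad P_sF=FX_1G_{K,1},\qquad V_0G_K=I,\qquad P_s\ge 0,$$ where $l^d=[l^d_1,\dots,l^d_s]^T$ with $$l^d_i=\min_{G_{K,2}}\ \max_{x:\,Fx\le g}\ F_iX_1G_{K,2}\,Q(x),\quad i=1,\dots,s,$$ and where the matrix $G_{K,2}$ in $G_K$ attains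 each of these minima, i.e. $\max_{x:\,Fx\le g}F_iX_1G_{K,2}Q(x)=l^d_i$ for all $i$. Then, with $K_1=U_0G_{K,1}$ and $K_2=U_0G_{K,2}$, the safe set $\mathcal{S}(F,g)$ is $\lambda$-contractive (and hence robustly invariant) for the closed-loop system under the controller $u(t)=K_1x(t)+K_2Q(x(t))$.
   Context: Data: inputs $u(0),\dots,u(T-1)$ are applied to the system and states $x(0),\dots,x(T)$ recorded; $U_0=[u(0)\cdots u(T-1)]\in\mathbb{R}^{m\times T}$, $X_0=[x(0)\cdots x(T-1)]\in\mathbb{R}^{n\times T}$, $X_1=[x(1)\cdots x(T)]\in\mathbb{R}^{n\times T}$, $V_0=\begin{bmatrix}X_0\\ Q(X_0)\end{bmatrix}\in\mathbb{R}^{(n+N)\times T}$ with $Q(X_0)=[Q(x(0))\cdots Q(x(T-1))]$. $G_{K,1}\in\mathbb{R}^{T\times n}$, $G_{K,2}\in\mathbb{R}^{T\times N}$. $F_i$ denotes the $i$-th row of $F$. Vector/matrix inequalities are elementwise; $P_s\ge0$ means all entries of $P_s$ are nonnegative. A polyhedral C-set is a compact convex polyhedron containing the origin in its interior. For $\lambda\in(0,1]$, a set $\mathcal{P}=\{x:Fx\le g\}$ is $\lambda$-contractive for the closed-loop system if $x(t)\in\mathcal{P}$ implies $x(t+1)\in\lambda\mathcal{P}=\{x:Fx\le\lambda g\}$ for all $t$ (and all admissible disturbances); it is robustly invariant if $x(0)\in\mathcal{P}$ implies $x(t)\in\mathcal{P}$ for all $t\ge0$. *)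

theory Defs
  imports "HOL-Analysis.Analysis"
begin

definition safe_set :: "real^'n^'s \<Rightarrow> real^'s \<Rightarrow> (real^'n) set" where
  "safe_set F g = {x. F *v x \<le> g}"

definition polyhedral_C_set :: "(real^'n) set \<Rightarrow> bool" where
  "polyhedral_C_set P \<longleftrightarrow> polyhedron P \<and> convex P \<and> compact P \<and> 0 \<in> interior P"

definition cmat :: "real^'n^'m \<Rightarrow> complex^'n^'m" where
  "cmat M = (\<chi> i j. complex_of_real (M $ i $ j))"

definition schur_stable :: "real^'n^'n \<Rightarrow> bool" where
  "schur_stable M \<longleftrightarrow>
     (\<forall>(\<mu>::complex) (v::complex^'n). v \<noteq> 0 \<and> cmat M *v v = \<mu> *s v \<longrightarrow> cmod \<mu> < 1)"

definition stabilizable :: "real^'n^'n \<Rightarrow> real^'m^'n \<Rightarrow> bool" where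
  "stabilizable A B \<longleftrightarrow> (\<exists>K::real^'n^'m. schur_stable (A + B ** K))"

definition hcat :: "real^'a^'r \<Rightarrow> real^'b^'r \<Rightarrow> real^('a + 'b)^'r" where
  "hcat M1 M2 = (\<chi> r c. case c of Inl i \<Rightarrow> M1 $ r $ i | Inr k \<Rightarrow> M2 $ r $ k)"

definition vcat :: "real^'c^'a \<Rightarrow> real^'c^'b \<Rightarrow> real^'c^('a + 'b)" where
  "vcat M1 M2 = (\<chi> r. case r of Inl i \<Rightarrow> M1 $ i | Inr k \<Rightarrow> M2 $ k)"

definition lambda_contractive :: "real \<Rightarrow> real^'n^'s \<Rightarrow> real^'s \<Rightarrow> (real^'n \<Rightarrow> real^'n) \<Rightarrow> bool" where
  "lambda_contractive lam F g f \<longleftrightarrow>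
     (\<forall>xs::nat \<Rightarrow> real^'n. (\<forall>t. xs (Suc t) = f (xs t)) \<longrightarrow>
        (\<forall>t. xs t \<in> safe_set F g \<longrightarrow> xs (Suc t) \<in> safe_set F (lam *\<^sub>R g)))"

text \<open>Robust invariance (no disturbances here): trajectories starting in P stay in P.\<close>
definition robustly_invariant :: "(real^'n) set \<Rightarrow> (real^'n \<Rightarrow> real^'n) \<Rightarrow> bool" where
  "robustly_invariant P f \<longleftrightarrow>
     (\<forall>xs::nat \<Rightarrow> real^'n. xs 0 \<in> P \<and> (\<forall>t. xs (Suc t) = f (xs t)) \<longrightarrow> (\<forall>t. xs t \<in> P))"

end

theory Submission
  imports Defs
begin

text \<open>Writing \<open>S = Q + As\<close>, the data satisfy \<open>X1 = (A1 + A2 As) X0 + A2 Q(X0) + B U0\<close>, so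
  \<open>V0 GK = I\<close> gives \<open>X1 GK1 = A1 + A2 As + B K1\<close> and \<open>X1 GK2 = A2 + B K2\<close>: the closed loop is
  \<open>x\<^sup>+ = X1 GK1 x + X1 GK2 Q(x)\<close>. Hence for \<open>F x \<le> g\<close>,
  \<open>F x\<^sup>+ = Ps F x + F X1 GK2 Q(x) \<le> Ps g + ld \<le> \<lambda> g\<close>, using \<open>Ps \<ge> 0\<close> and the definition of \<open>ld\<close>
  as a supremum over the safe set. Invariance follows since \<open>\<lambda> g \<le> g\<close>.\<close>

lemma matrix_add_rdistrib:
  fixes A B :: "'a::semiring_1^'n^'m" and C :: "'a^'p^'n"
  shows "(A + B) ** C = A ** C + B ** C"
  by (vector matrix_matrix_mult_def sum.distrib[symmetric] field_simps)

lemma matrix_mult_columns: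
  fixes M :: "'a::semiring_1^'n^'m" and v :: "'c::finite \<Rightarrow> 'a^'n"
  shows "M ** (\<chi> i j. v j $ i) = (\<chi> i j. (M *v v j) $ i)"
  by (simp add: matrix_matrix_mult_def matrix_vector_mult_def vec_eq_iff)

lemma vcat_mult_hcat_nth [simp]:
  "(vcat M1 M2 ** hcat N1 N2) $ Inl i $ Inl j = (M1 ** N1) $ i $ j"
  "(vcat M1 M2 ** hcat N1 N2) $ Inl i $ Inr k = (M1 ** N2) $ i $ k"
  "(vcat M1 M2 ** hcat N1 N2) $ Inr l $ Inl j = (M2 ** N1) $ l $ j"
  "(vcat M1 M2 ** hcat N1 N2) $ Inr l $ Inr k = (M2 ** N2) $ l $ k"
  by (simp_all add: matrix_matrix_mult_def vcat_def hcat_def)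

lemma vcat_mult_hcat_eq_mat_1_iff:
  "vcat M1 M2 ** hcat N1 N2 = mat 1 \<longleftrightarrow>
     M1 ** N1 = mat 1 \<and> M1 ** N2 = 0 \<and> M2 ** N1 = 0 \<and> M2 ** N2 = mat 1"
  by (auto simp: vec_eq_iff split_sum_all mat_def)

lemma data_based_closed_loop:
  fixes X1 :: "real^'T^'n" and Z0 :: "real^'T^'N" and U0 :: "real^'T^'m"
  assumes "X1 = Abar ** X0 + A2 ** Z0 + B ** U0"
    and "vcat X0 Z0 ** hcat G1 G2 = mat 1"
  shows "X1 ** G1 = Abar + B ** (U0 ** G1)" and "X1 ** G2 = A2 + B ** (U0 ** G2)"
  using assms by (simp_all add: vcat_mult_hcat_eq_mat_1_iff matrix_add_rdistrib
      matrix_mul_assoc[symmetric])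

lemma nonneg_matrix_vector_mono:
  fixes P :: "real^'n^'m"
  assumes "\<forall>i j. 0 \<le> P $ i $ j" and "x \<le> y"
  shows "P *v x \<le> P *v y"
  using assms unfolding less_eq_vec_def matrix_vector_mult_def
  by (auto intro!: sum_mono mult_left_mono)

lemma component_le_SUP_compact:
  fixes h :: "'a::topological_space \<Rightarrow> real^'n"
  assumes "compact K" and "continuous_on K h" and "z \<in> K"
  shows "h z $ i \<le> (SUP y\<in>K. h y $ i)"
proof (rule cSUP_upper[OF \<open>z \<in> K\<close>])
  have "compact ((\<lambda>y. h y $ i) ` K)"
    using assms by (intro compact_continuous_image continuous_intros)
  then show "bdd_above ((\<lambda>y. h y $ i) ` K)"
    by (intro bounded_imp_bdd_above compact_imp_bounded)
qed

lemma safe_set_contractive_step: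
  fixes F :: "real^'n^'s" and Ps :: "real^'s^'s"
  assumes "Ps ** F = F ** M1" and "\<forall>i j. 0 \<le> Ps $ i $ j"
    and "Ps *v g \<le> lam *\<^sub>R g - l" and "F ** M2 *v w \<le> l"
    and "z \<in> safe_set F g"
  shows "M1 *v z + M2 *v w \<in> safe_set F (lam *\<^sub>R g)"
proof -
  have "F *v (M1 *v z + M2 *v w) = Ps *v (F *v z) + F ** M2 *v w"
    by (simp add: matrix_vector_right_distrib matrix_vector_mul_assoc assms(1))
  also have "\<dots> \<le> Ps *v g + l"
    using assms(2,4,5) by (intro add_mono nonneg_matrix_vector_mono) (auto simp: safe_set_def)
  also have "\<dots> \<le> lam *\<^sub>R g"
    using assms(3) by (simp add: le_diff_eq)
  finally show ?thesis
    by (simp add: safe_set_def)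
qed

lemma safe_set_scaleR_subset:
  assumes "0 \<in> safe_set F g" and "0 \<le> lam" and "lam \<le> 1"
  shows "safe_set F (lam *\<^sub>R g) \<subseteq> safe_set F g"
proof -
  have "lam *\<^sub>R g \<le> g"
    using assms by (auto simp: safe_set_def less_eq_vec_def mult_left_le_one_le)
  then show ?thesis
    by (auto simp: safe_set_def intro: order_trans)
qed

lemma lambda_contractive_iff:
  "lambda_contractive lam F g f \<longleftrightarrow> (\<forall>z\<in>safe_set F g. f z \<in> safe_set F (lam *\<^sub>R g))"
proof (intro iffI ballI)
  fix z
  assume "lambda_contractive lam F g f" and "z \<in> safe_set F g"
  moreover define xs where "xs t = (f ^^ t) z" for t
  then have "\<forall>t. xs (Suc t) = f (xs t)" and "xs 0 = z"
    by simp_all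
  ultimately show "f z \<in> safe_set F (lam *\<^sub>R g)"
    unfolding lambda_contractive_def by metis
qed (simp add: lambda_contractive_def)

lemma robustly_invariant_if_mapsto:
  assumes "\<And>z. z \<in> P \<Longrightarrow> f z \<in> P"
  shows "robustly_invariant P f"
  unfolding robustly_invariant_def
proof (intro allI impI)
  fix xs :: "nat \<Rightarrow> _" and t
  assume "xs 0 \<in> P \<and> (\<forall>t. xs (Suc t) = f (xs t))"
  then show "xs t \<in> P"
    using assms by (induction t) auto
qed

lemma lambda_contractive_imp_robustly_invariant:
  assumes "lambda_contractive lam F g f" and "0 \<in> safe_set F g" and "0 \<le> lam" and "lam \<le> 1"
  shows "robustly_invariant (safe_set F g) f"
proof (rule robustly_invariant_if_mapsto)
  fix z
  assume "z \<in> safe_set F g"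
  then have "f z \<in> safe_set F (lam *\<^sub>R g)"
    using assms(1) by (simp add: lambda_contractive_iff)
  then show "f z \<in> safe_set F g"
    using safe_set_scaleR_subset[OF assms(2-4)] by blast
qed

theorem theorem1:
  fixes A1 :: "real^'n^'n" and A2 :: "real^'N^'n" and B :: "real^'m^'n"
    and S :: "real^'n \<Rightarrow> real^'N" and As :: "real^'n^'N"
    and F :: "real^'n^'s" and g :: "real^'s"
    and x :: "nat \<Rightarrow> real^'n" and u :: "nat \<Rightarrow> real^'m"
    and tau :: "'T::finite \<Rightarrow> nat"
    and lam :: real
    and GK1 :: "real^'n^'T" and GK2 :: "real^'N^'T" and Ps :: "real^'s^'s" and ld :: "real^'s"
    and Q :: "real^'n \<Rightarrow> real^'N"
    and U0 :: "real^'T^'m" and X0 X1 :: "real^'T^'n" and V0 :: "real^'T^('n + 'N)"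
    and GK :: "real^('n + 'N)^'T" and K1 :: "real^'n^'m" and K2 :: "real^'N^'m"
  assumes Q_def: "Q = (\<lambda>z. S z - As *v z)"
    and U0_def: "U0 = (\<chi> i j. u (tau j) $ i)"
    and X0_def: "X0 = (\<chi> i j. x (tau j) $ i)"
    and X1_def: "X1 = (\<chi> i j. x (Suc (tau j)) $ i)"
    and V0_def: "V0 = vcat X0 (\<chi> k j. Q (x (tau j)) $ k)"
    and GK_def: "GK = hcat GK1 GK2"
    and K1_def: "K1 = U0 ** GK1"
    and K2_def: "K2 = U0 ** GK2"
    and S_diff: "\<forall>z. S differentiable (at z)"
    and S0: "S 0 = 0"
    and As_jac: "(S has_derivative (\<lambda>z. As *v z)) (at 0)"
    and stab: "stabilizable (A1 + A2 ** As) B"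
    and Q_lip: "\<exists>L. L-lipschitz_on (safe_set F g) Q"
    and Cset: "polyhedral_C_set (safe_set F g)"
    and tau_enum: "bij_betw tau UNIV {..<CARD('T)}"
    and data: "\<forall>t < CARD('T). x (Suc t) = A1 *v x t + A2 *v S (x t) + B *v u t"
    and V0_rank: "rank V0 = CARD('n + 'N)"
    and T_ge: "CARD('T) \<ge> CARD('n) + CARD('N) + 1"
    and lam_pos: "0 < lam" and lam_le: "lam \<le> 1"
    and ld_def: "\<forall>i. ld $ i = (SUP z\<in>safe_set F g. (F ** X1 ** GK2 *v Q z) $ i)"
    and ld_min: "\<forall>i (G2::real^'N^'T).
        (SUP z\<in>safe_set F g. (F ** X1 ** GK2 *v Q z) $ i)
          \<le> (SUP z\<in>safe_set F g. (F ** X1 ** G2 *v Q z) $ i)"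
    and c1: "Ps *v g \<le> lam *\<^sub>R g - ld"
    and c2: "Ps ** F = F ** X1 ** GK1"
    and c3: "V0 ** GK = mat 1"
    and c4: "\<forall>i j. 0 \<le> Ps $ i $ j"
  shows "lambda_contractive lam F g (\<lambda>z. A1 *v z + A2 *v S z + B *v (K1 *v z + K2 *v Q z))
    \<and> robustly_invariant (safe_set F g) (\<lambda>z. A1 *v z + A2 *v S z + B *v (K1 *v z + K2 *v Q z))"
proof -
  define QX0 :: "real^'T^'N" where "QX0 = (\<chi> k j. Q (x (tau j)) $ k)"
  define f where "f = (\<lambda>z. A1 *v z + A2 *v S z + B *v (K1 *v z + K2 *v Q z))"
  have S_split: "A1 *v z + A2 *v S z = (A1 + A2 ** As) *v z + A2 *v Q z" for z
    by (simp add: Q_def algebra_simps matrix_vector_mul_assoc)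
  have "\<And>j. tau j < CARD('T)"
    using tau_enum by (auto simp: bij_betw_def)
  then have "X1 = (A1 + A2 ** As) ** X0 + A2 ** QX0 + B ** U0"
    using data by (simp add: X1_def X0_def QX0_def U0_def matrix_mult_columns S_split vec_eq_iff)
  from data_based_closed_loop[OF this] c3
  have closed_loop: "f z = (X1 ** GK1) *v z + (X1 ** GK2) *v Q z" for z
    by (simp add: f_def K1_def K2_def V0_def GK_def QX0_def S_split algebra_simps
        matrix_vector_mul_assoc[symmetric])
  obtain L where "L-lipschitz_on (safe_set F g) Q"
    using Q_lip by blast
  then have "continuous_on (safe_set F g) (\<lambda>z. F ** X1 ** GK2 *v Q z)"
    by (intro continuous_on_compose2[OF linear_continuous_on[OF matrix_vector_mul_bounded_linear]]
        lipschitz_on_continuous_on) auto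
  then have "F ** X1 ** GK2 *v Q z \<le> ld" if "z \<in> safe_set F g" for z
    using Cset that by (auto simp: less_eq_vec_def ld_def polyhedral_C_set_def
        intro: component_le_SUP_compact)
  then have contractive: "lambda_contractive lam F g f"
    using safe_set_contractive_step[OF c2[folded matrix_mul_assoc] c4 c1, of "X1 ** GK2"]
    by (simp add: lambda_contractive_iff closed_loop matrix_mul_assoc)
  have "0 \<in> safe_set F g"
    using Cset interior_subset by (auto simp: polyhedral_C_set_def)
  with contractive lam_pos lam_le show ?thesis
    unfolding f_def by (simp add: lambda_contractive_imp_robustly_invariant)
qed

end
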